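(* Let $p\geq 2$ be an integer, $n=2^p-1$, and let $s$ be an integer with $s\geq 3\cdot 2^{p-2}$. Then there exists a perfect code in the graph $\Gamma_n(1^s)$.
   Context: The $n$-cube $Q_n$ is the graph whose vertex set is the set $\mathbb{B}_n$ of binary strings of length $n$, two strings being adjacent if they differ in exactly one position. For an integer $s\ge 1$, $\Gamma_n(1^s)$ is the subgraph of $Q_n$ induced by the binary strings of length $n$ that do not contain $1^s$ (the string of $s$ consecutive 1's) as a substring, where $\bm{f}$ is a substring of $\bm{s}$ if $\bm{s}=\bm{x}\bm{f}\bm{y}$ for some (possibly empty) strings $\bm{x},\bm{y}$. A perfect code in a graph $G$ is a set $C$ of vertices such that every vertex of $G$ lies in the closed neighbourhood $N[c]=\{v: d_G(c,v)\le 1\}$ of exactly one vertex $c\in C$ (equivalently, $C$ is a dominating set of $G$ and any two distinct elements of $C$ are at distance at least $3$ in $G$). *)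

theory Defs
  imports Main
begin

text \<open>Binary strings are lists of booleans (True = 1, False = 0).\<close>

definition is_substring :: "bool list \<Rightarrow> bool list \<Rightarrow> bool" where
  "is_substring f w \<longleftrightarrow> (\<exists>x y. w = x @ f @ y)"

definition hamming :: "bool list \<Rightarrow> bool list \<Rightarrow> nat" where
  "hamming u v = card {i. i < length u \<and> u ! i \<noteq> v ! i}"

definition cube_adj :: "bool list \<Rightarrow> bool list \<Rightarrow> bool" where
  "cube_adj u v \<longleftrightarrow> length u = length v \<and> hamming u v = 1"

definition Gamma_vertices :: "nat \<Rightarrow> nat \<Rightarrow> bool list set" where
  "Gamma_vertices n s = {w. length w = n \<and> \<not> is_substring (replicate s True) w}"

definition closed_nbhd :: "'a set \<Rightarrow> ('a \<Rightarrow> 'a \<Rightarrow> bool) \<Rightarrow> 'a \<Rightarrow> 'a set" where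
  "closed_nbhd V E c = {v \<in> V. v = c \<or> E c v}"

definition perfect_code :: "'a set \<Rightarrow> ('a \<Rightarrow> 'a \<Rightarrow> bool) \<Rightarrow> 'a set \<Rightarrow> bool" where
  "perfect_code V E C \<longleftrightarrow> C \<subseteq> V \<and>
     (\<forall>v \<in> V. \<exists>!c. c \<in> C \<and> v \<in> closed_nbhd V E c)"

end

theory Submission
  imports Defs
begin

text \<open>Let \<open>n = 2^p - 1\<close> and \<open>m = 2^(p-2)\<close>. The syndrome of a word, the XOR of the positions
  \<open>1..n\<close> carrying a 1, changes by XOR with \<open>j\<close> when position \<open>j\<close> is flipped; hence every coset
  \<open>{w. syndrome w = m}\<close> of the Hamming code is a perfect code in \<open>Q_n\<close>. The functional
  "bit \<open>p-1\<close> differs from bit \<open>p-2\<close>" is XOR-linear and is true exactly on the positions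
  \<open>m..3m-1\<close>. A run of at least \<open>3m\<close> ones covers these \<open>2m\<close> positions, so such a word has a
  syndrome on which the functional is false, unlike \<open>m\<close>. Thus the coset for \<open>m\<close> lies inside
  \<open>\<Gamma>_n(1^s)\<close>, and a perfect code of a graph contained in an induced subgraph stays perfect there.\<close>

unbundle bit_operations_syntax

lemma perfect_code_induced_subgraph:
  assumes "perfect_code W E C" and "C \<subseteq> V" and "V \<subseteq> W"
  shows "perfect_code V E C"
  unfolding perfect_code_def
proof (intro conjI ballI)
  fix v assume "v \<in> V"
  with assms obtain c where c: "c \<in> C" "v \<in> closed_nbhd W E c"
    and uniq: "\<And>c'. c' \<in> C \<Longrightarrow> v \<in> closed_nbhd W E c' \<Longrightarrow> c' = c"
    unfolding perfect_code_def by blast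
  have "v \<in> closed_nbhd V E c"
    using c(2) \<open>v \<in> V\<close> by (simp add: closed_nbhd_def)
  moreover have "closed_nbhd V E c' \<subseteq> closed_nbhd W E c'" for c'
    using assms(3) by (auto simp: closed_nbhd_def)
  ultimately show "\<exists>!c. c \<in> C \<and> v \<in> closed_nbhd V E c"
    using c(1) uniq by blast
qed (use assms in simp)

lemma cube_adj_iff_flip: "cube_adj u v \<longleftrightarrow> (\<exists>j<length u. v = u[j := \<not> u!j])"
proof
  assume "cube_adj u v"
  then have len: "length u = length v" and card: "card {i. i < length u \<and> u ! i \<noteq> v ! i} = 1"
    by (auto simp: cube_adj_def hamming_def)
  from card obtain j where j: "{i. i < length u \<and> u ! i \<noteq> v ! i} = {j}"
    by (rule card_1_singletonE)
  then have "j < length u" and flipped: "u!j \<noteq> v!j" by auto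
  have "v = u[j := \<not> u!j]"
  proof (rule nth_equalityI)
    show "length v = length (u[j := \<not> u!j])" using len by simp
    fix i assume "i < length v"
    then show "v ! i = u[j := \<not> u!j] ! i"
      using j flipped len by (cases "i = j") (auto simp: set_eq_iff)
  qed
  with \<open>j < length u\<close> show "\<exists>j<length u. v = u[j := \<not> u!j]" by blast
next
  assume "\<exists>j<length u. v = u[j := \<not> u!j]"
  then obtain j where "j < length u" and v: "v = u[j := \<not> u!j]" by blast
  then have "{i. i < length u \<and> u ! i \<noteq> v ! i} = {j}"
    by (auto simp: nth_list_update)
  then show "cube_adj u v" using v by (simp add: cube_adj_def hamming_def)
qed

lemma xor_less_power2_nat: "(x::nat) < 2^p \<Longrightarrow> y < 2^p \<Longrightarrow> x XOR y < 2^p"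
  by (metis take_bit_nat_eq_self_iff take_bit_xor)

lemma xor_right_cancel_nat: "(a::nat) XOR x = b XOR x \<longleftrightarrow> a = b"
proof
  assume "a XOR x = b XOR x"
  then have "(a XOR x) XOR x = (b XOR x) XOR x" by simp
  then show "a = b" by (simp add: xor.assoc)
qed simp

fun syndrome_from :: "nat \<Rightarrow> bool list \<Rightarrow> nat" where
  "syndrome_from k [] = 0"
| "syndrome_from k (b # w) = (if b then Suc k else 0) XOR syndrome_from (Suc k) w"

abbreviation syndrome :: "bool list \<Rightarrow> nat" where
  "syndrome \<equiv> syndrome_from 0"

lemma syndrome_from_flip:
  "j < length w \<Longrightarrow> syndrome_from k (w[j := \<not> w!j]) = Suc (k + j) XOR syndrome_from k w"
proof (induction w arbitrary: k j)
  case Nil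
  then show ?case by simp
next
  case (Cons b w)
  show ?case
  proof (cases j)
    case 0
    then show ?thesis by (cases b) (simp_all add: xor.assoc[symmetric])
  next
    case (Suc j')
    with Cons show ?thesis by (simp add: xor.left_commute)
  qed
qed

lemma syndrome_from_less_power2: "k + length w < 2^p \<Longrightarrow> syndrome_from k w < 2^p"
proof (induction w arbitrary: k)
  case Nil
  then show ?case by simp
next
  case (Cons b w)
  then have "syndrome_from (Suc k) w < 2^p" and "(if b then Suc k else 0) < (2::nat)^p"
    by auto
  then show ?case by (simp add: xor_less_power2_nat del: of_bool_eq)
qed

lemma syndrome_from_parity:
  assumes "\<not> g 0" and g_xor: "\<And>x y. g (x XOR y) \<longleftrightarrow> g x \<noteq> g y"
  shows "g (syndrome_from k w) \<longleftrightarrow> odd (\<Sum>i<length w. of_bool (w!i \<and> g (Suc (k + i))) :: nat)"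
proof (induction w arbitrary: k)
  case Nil
  then show ?case using assms(1) by simp
next
  case (Cons b w)
  then show ?case
    using assms(1) by (simp add: g_xor sum.lessThan_Suc_shift del: sum.lessThan_Suc)
qed

lemma syndrome_of_cube_adj:
  assumes "cube_adj c v"
  obtains j where "c = v[j := \<not> v!j]" and "syndrome c = Suc j XOR syndrome v"
proof -
  from assms obtain j where "j < length c" and "v = c[j := \<not> c!j]"
    by (auto simp: cube_adj_iff_flip)
  then have "j < length v" and "c = v[j := \<not> v!j]" by simp_all
  with syndrome_from_flip[of j v 0] that show thesis by simp
qed

lemma syndrome_ne_of_cube_adj: "cube_adj c v \<Longrightarrow> syndrome c \<noteq> syndrome v"
  by (metis syndrome_of_cube_adj xor_right_cancel_nat[of _ _ 0] xor.left_neutral nat.distinct(1))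

lemma syndromes_eq_imp_eq_in_closed_nbhd:
  assumes c: "v = c \<or> cube_adj c v" and c': "v = c' \<or> cube_adj c' v"
    and eq: "syndrome c = syndrome c'"
  shows "c = c'"
proof (cases "v = c \<or> v = c'")
  case True
  then show ?thesis using c c' eq syndrome_ne_of_cube_adj by metis
next
  case False
  with c c' have "cube_adj c v" and "cube_adj c' v" by auto
  then obtain j j' where "c = v[j := \<not> v!j]" "syndrome c = Suc j XOR syndrome v"
    and "c' = v[j' := \<not> v!j']" "syndrome c' = Suc j' XOR syndrome v"
    by (metis syndrome_of_cube_adj)
  with eq show ?thesis by (simp add: xor_right_cancel_nat)
qed

lemma exists_syndrome_in_closed_nbhd:
  assumes "length v = 2^p - 1" and "m < 2^p"
  obtains c where "syndrome c = m" and "v = c \<or> cube_adj c v"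
proof (cases "syndrome v = m")
  case True
  then show ?thesis using that by blast
next
  case False
  define j where "j = (syndrome v XOR m) - 1"
  have "syndrome v < 2^p"
    using assms(1) by (intro syndrome_from_less_power2) simp
  then have "syndrome v XOR m < 2^p"
    using assms(2) by (rule xor_less_power2_nat)
  moreover have "syndrome v XOR m \<noteq> 0"
    using False xor_right_cancel_nat[of "syndrome v" m m] by simp
  ultimately have j: "j < length v" and sj: "Suc j = syndrome v XOR m"
    using assms(1) by (auto simp: j_def)
  have "syndrome (v[j := \<not> v!j]) = m"
    using syndrome_from_flip[OF j, of 0] sj by (simp add: xor.commute[of "syndrome v" m] xor.assoc)
  moreover have "cube_adj (v[j := \<not> v!j]) v"
    using j by (auto simp: cube_adj_iff_flip)
  ultimately show ?thesis using that by blast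
qed

theorem hamming_coset_perfect_code:
  assumes "m < 2^p"
  shows "perfect_code {w. length w = 2^p - 1} cube_adj {w. length w = 2^p - 1 \<and> syndrome w = m}"
    (is "perfect_code ?W cube_adj ?C")
proof -
  have "\<exists>!c. c \<in> ?C \<and> v \<in> closed_nbhd ?W cube_adj c" if "v \<in> ?W" for v
  proof -
    from that have lv: "length v = 2^p - 1" by simp
    obtain c where c: "syndrome c = m" "v = c \<or> cube_adj c v"
      using exists_syndrome_in_closed_nbhd[OF lv assms] .
    have "length c = 2^p - 1"
      using c(2) lv unfolding cube_adj_def by auto
    with c lv have "c \<in> ?C \<and> v \<in> closed_nbhd ?W cube_adj c"
      by (simp add: closed_nbhd_def)
    moreover have "c' = c" if "c' \<in> ?C \<and> v \<in> closed_nbhd ?W cube_adj c'" for c'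
    proof -
      from that have "v = c' \<or> cube_adj c' v" and "syndrome c' = m"
        by (auto simp: closed_nbhd_def)
      with c show "c' = c" by (metis syndromes_eq_imp_eq_in_closed_nbhd)
    qed
    ultimately show ?thesis by blast
  qed
  moreover have "?C \<subseteq> ?W" by blast
  ultimately show ?thesis
    unfolding perfect_code_def by blast
qed

lemma bit_Suc_ne_bit_iff:
  assumes "(x::nat) < 4 * 2^k"
  shows "bit x (Suc k) \<noteq> bit x k \<longleftrightarrow> 2^k \<le> x \<and> x < 3 * 2^k"
proof -
  define q where "q = x div 2^k"
  have "q < 4"
    using assms by (simp add: q_def div_less_iff_less_mult)
  then have "q = 0 \<or> q = 1 \<or> q = 2 \<or> q = 3" by auto
  moreover have "bit x (Suc k) = odd (q div 2)" and "bit x k = odd q"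
    unfolding bit_nat_def q_def by (metis div_mult2_eq power_Suc2) simp
  moreover have "2^k \<le> x \<and> x < 3 * 2^k \<longleftrightarrow> 1 \<le> q \<and> q < 3"
    by (simp add: q_def div_less_iff_less_mult less_eq_div_iff_mult_less_eq)
  ultimately show ?thesis by auto
qed

lemma syndrome_ne_of_long_run:
  assumes len: "length w = 4 * 2^k - 1" and s: "3 * 2^k \<le> s"
    and run: "is_substring (replicate s True) w"
  shows "syndrome w \<noteq> 2^k"
proof
  define m :: nat where "m = 2^k"
  define g where "g x \<longleftrightarrow> bit x (Suc k) \<noteq> bit x k" for x :: nat
  have g_iff: "g x \<longleftrightarrow> m \<le> x \<and> x < 3 * m" if "x < 4 * m" for x
    using bit_Suc_ne_bit_iff[of x k] that by (simp add: g_def m_def)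
  have g_zero: "\<not> g 0" and g_xor: "g (x XOR y) \<longleftrightarrow> g x \<noteq> g y" for x y
    by (auto simp: g_def bit_xor_iff)
  from run obtain u u' where w: "w = u @ replicate s True @ u'"
    by (auto simp: is_substring_def)
  have ones: "w ! i" if "m - 1 \<le> i" "i < 3 * m - 1" for i
  proof -
    have "length u \<le> i" and "i - length u < s"
      using len w s that by (auto simp: m_def)
    then show ?thesis using w by (simp add: nth_append)
  qed
  have "(\<Sum>i<length w. of_bool (w!i \<and> g (Suc (0 + i))) :: nat)
      = (\<Sum>i<length w. of_bool (i \<in> {m - 1..<3 * m - 1}))"
  proof (rule sum.cong)
    fix i assume "i \<in> {..<length w}"
    then have "Suc i < 4 * m" using len by (simp add: m_def)
    then show "of_bool (w!i \<and> g (Suc (0 + i))) = (of_bool (i \<in> {m - 1..<3 * m - 1}) :: nat)"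
      using g_iff ones by (auto simp: m_def)
  qed simp
  also have "\<dots> = card ({..<length w} \<inter> {m - 1..<3 * m - 1})"
    by (simp only: sum_of_bool_eq finite_lessThan Collect_mem_eq of_nat_id)
  also have "{..<length w} \<inter> {m - 1..<3 * m - 1} = {m - 1..<3 * m - 1}"
    using len by (auto simp: m_def)
  also have "card {m - 1..<3 * m - 1} = 2 * m"
    by (simp add: m_def)
  finally have "\<not> g (syndrome w)"
    using syndrome_from_parity[of g, OF g_zero g_xor] by simp
  moreover assume "syndrome w = 2^k"
  moreover have "g m"
    using g_iff by (simp add: m_def)
  ultimately show False by (simp add: m_def)
qed

theorem corollary3:
  fixes p s :: nat
  assumes "p \<ge> 2"
    and "s \<ge> 3 * 2 ^ (p - 2)"
  shows "\<exists>C. perfect_code (Gamma_vertices (2 ^ p - 1) s) cube_adj C"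
proof -
  define k where "k = p - 2"
  have "p = Suc (Suc k)"
    using assms(1) by (simp add: k_def)
  then have p: "2 ^ p - 1 = 4 * 2 ^ k - (1::nat)"
    by simp
  let ?C = "{w. length w = 2^p - 1 \<and> syndrome w = 2^k}"
  have "perfect_code {w. length w = 2^p - 1} cube_adj ?C"
    by (rule hamming_coset_perfect_code) (use assms(1) in \<open>simp add: k_def\<close>)
  moreover have "?C \<subseteq> Gamma_vertices (2 ^ p - 1) s"
    using syndrome_ne_of_long_run[of _ k s] assms(2) p
    by (auto simp: Gamma_vertices_def k_def)
  moreover have "Gamma_vertices (2 ^ p - 1) s \<subseteq> {w. length w = 2^p - 1}"
    by (auto simp: Gamma_vertices_def)
  ultimately show ?thesis
    by (blast intro: perfect_code_induced_subgraph)
qed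

end
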